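(* Let $n$ be a natural number and $T=(t_{ij})\in M_n(\mathbb{C})$. Then (i) $$\sup\{|\mathrm{tr}((R\circ C)T)|:R,C\in M_n(\mathbb{C}),\ \|R\|_r\le1,\ \|C\|_c\le1\}=\sup\Big\{\sum_{i=1}^n\Big(\sum_{j=1}^n|t_{ji}|^2b_{ij}\Big)^{1/2}: b_{ij}\ge0,\ \sum_{i=1}^nb_{ij}\le1 \text{ for all } j\Big\};$$ (ii) $$\sup\{|\mathrm{tr}((R\circ C)T)|:R,C\in M_n(\mathbb{C}),\ \|R\|_r\le1,\ \|C\|_c\le1\}\le n\max\{|t_{ij}|:1\le i,j\le n\}.$$
   Context: $R\circ C$ denotes the entrywise (Schur) product $(r_{ij}c_{ij})$. For a scalar matrix, $\|R\|_r:=\max_i(\sum_j|r_{ij}|^2)^{1/2}$ and $\|C\|_c:=\max_j(\sum_i|c_{ij}|^2)^{1/2}$. *)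

theory Defs
  imports "HOL-Analysis.Analysis"
begin

text \<open>Square complex matrices of size n are represented as complex^'n^'n,
 with 'n a finite index type (CARD('n) = n).\<close>

definition schur :: "complex^'n^'m \<Rightarrow> complex^'n^'m \<Rightarrow> complex^'n^'m" where
  "schur R C = (\<chi> i j. R$i$j * C$i$j)"

definition mtrace :: "complex^'n^'n \<Rightarrow> complex" where
  "mtrace A = (\<Sum>i\<in>UNIV. A$i$i)"

definition row_norm :: "complex^'n^'m \<Rightarrow> real" where
  "row_norm R = Max ((\<lambda>i. sqrt (\<Sum>j\<in>UNIV. (cmod (R$i$j))^2)) ` UNIV)"

definition col_norm :: "complex^'n^'m \<Rightarrow> real" where
  "col_norm C = Max ((\<lambda>j. sqrt (\<Sum>i\<in>UNIV. (cmod (C$i$j))^2)) ` UNIV)"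

end

theory Submission
  imports Defs "HOL-Library.Complemented_Lattices"
begin

text \<open>Since tr((R o C) T) = sum_i sum_j r_ij (c_ij t_ji), Cauchy-Schwarz in each row shows that,
  for fixed C, the supremum over R is sum_i (sum_j |c_ij t_ji|^2)^(1/2), attained by the normalised
  conjugate rows r_ij = conj(c_ij t_ji) / s_i. Substituting b_ij = |c_ij|^2 turns the column
  condition on C into the column-sum condition on b, which gives (i). For (ii), bound |t_ji| by its
  maximum M and apply Cauchy-Schwarz once more:
  sum_i (sum_j b_ij)^(1/2) <= (n sum_ij b_ij)^(1/2) <= n.\<close>

lemma mtrace_schur_mult:
  fixes R C :: "complex^'n^'m" and T :: "complex^'m^'n"
  shows "mtrace (schur R C ** T) = (\<Sum>i\<in>UNIV. \<Sum>j\<in>UNIV. R$i$j * C$i$j * T$j$i)"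
  by (simp add: mtrace_def schur_def matrix_matrix_mult_def)

lemma row_norm_le_iff:
  "row_norm (R::complex^'n^'m) \<le> r \<longleftrightarrow> (\<forall>i. L2_set (\<lambda>j. cmod (R$i$j)) UNIV \<le> r)"
  unfolding row_norm_def L2_set_def by (subst Max_le_iff) auto

lemma col_norm_le_iff:
  "col_norm (C::complex^'n^'m) \<le> r \<longleftrightarrow> (\<forall>j. L2_set (\<lambda>i. cmod (C$i$j)) UNIV \<le> r)"
  unfolding col_norm_def L2_set_def by (subst Max_le_iff) auto

lemma L2_set_le_1_iff: "L2_set f A \<le> 1 \<longleftrightarrow> (\<Sum>i\<in>A. (f i)\<^sup>2) \<le> 1"
  unfolding L2_set_def by simp

lemma sum_sqrt_le_sqrt_card_mult_sum:
  fixes x :: "'a \<Rightarrow> real"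
  assumes "\<And>i. i \<in> I \<Longrightarrow> 0 \<le> x i"
  shows "(\<Sum>i\<in>I. sqrt (x i)) \<le> sqrt (card I * (\<Sum>i\<in>I. x i))"
proof -
  have "(\<Sum>i\<in>I. sqrt (x i)) = (\<Sum>i\<in>I. \<bar>1\<bar> * \<bar>sqrt (x i)\<bar>)"
    using assms by simp
  also have "\<dots> \<le> L2_set (\<lambda>_. 1) I * L2_set (\<lambda>i. sqrt (x i)) I"
    by (rule L2_set_mult_ineq)
  also have "L2_set (\<lambda>i. sqrt (x i)) I = sqrt (\<Sum>i\<in>I. x i)"
    unfolding L2_set_def using assms by (simp cong: sum.cong)
  finally show ?thesis
    by (simp add: L2_set_constant real_sqrt_mult)
qed

text \<open>For s = 0 both claims hold through the junk value x / 0 = 0, so callers need no case split.\<close>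

lemma L2_set_conj_normalized:
  fixes x :: "'a \<Rightarrow> complex" and J :: "'a set"
  defines "s \<equiv> L2_set (\<lambda>j. cmod (x j)) J"
  shows "L2_set (\<lambda>j. cmod (cnj (x j) / of_real s)) J \<le> 1"
    and "(\<Sum>j\<in>J. cnj (x j) / of_real s * x j) = of_real s"
proof -
  have "L2_set (\<lambda>j. cmod (cnj (x j) / of_real s)) J \<le> 1 \<and>
        (\<Sum>j\<in>J. cnj (x j) / of_real s * x j) = of_real s"
  proof (cases "s = 0")
    case True
    then show ?thesis by (simp add: L2_set_0')
  next
    case False
    have s_pos: "0 < s" using False unfolding s_def by (simp add: order_neq_le_trans)
    have "L2_set (\<lambda>j. cmod (cnj (x j) / of_real s)) J = L2_set (\<lambda>j. inverse s * cmod (x j)) J"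
      using s_pos by (simp add: norm_divide field_simps)
    also have "\<dots> = 1"
      using s_pos by (simp flip: L2_set_right_distrib add: s_def[symmetric])
    finally have norm_one: "L2_set (\<lambda>j. cmod (cnj (x j) / of_real s)) J = 1" .
    have "(\<Sum>j\<in>J. cnj (x j) / of_real s * x j) = (\<Sum>j\<in>J. of_real ((cmod (x j))\<^sup>2 / s))"
      by (intro sum.cong refl, simp only: of_real_divide complex_norm_square) (simp add: mult.commute)
    also have "\<dots> = of_real ((\<Sum>j\<in>J. (cmod (x j))\<^sup>2) / s)"
      by (simp only: sum_divide_distrib of_real_sum)
    also have "(\<Sum>j\<in>J. (cmod (x j))\<^sup>2) = s\<^sup>2"
      unfolding s_def L2_set_def by (simp add: sum_nonneg)
    finally have "(\<Sum>j\<in>J. cnj (x j) / of_real s * x j) = of_real s"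
      using s_pos by (simp add: power2_eq_square)
    with norm_one show ?thesis by simp
  qed
  then show "L2_set (\<lambda>j. cmod (cnj (x j) / of_real s)) J \<le> 1"
    and "(\<Sum>j\<in>J. cnj (x j) / of_real s * x j) = of_real s" by auto
qed

definition weighted_root_sum :: "complex^'m^'n \<Rightarrow> real^'n^'m \<Rightarrow> real" where
  "weighted_root_sum T b = (\<Sum>i\<in>UNIV. sqrt (\<Sum>j\<in>UNIV. (cmod (T$j$i))\<^sup>2 * b$i$j))"

lemma weighted_root_sum_nonneg:
  assumes "\<forall>i j. 0 \<le> b$i$j"
  shows "0 \<le> weighted_root_sum T b"
  unfolding weighted_root_sum_def using assms by (simp add: sum_nonneg)

lemma weighted_root_sum_cmod_sq:
  fixes C :: "complex^'n^'m" and T :: "complex^'m^'n"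
  shows "weighted_root_sum T (\<chi> i j. (cmod (C$i$j))\<^sup>2) = (\<Sum>i\<in>UNIV. L2_set (\<lambda>j. cmod (C$i$j * T$j$i)) UNIV)"
  unfolding weighted_root_sum_def L2_set_def by (simp add: norm_mult power_mult_distrib mult.commute)

lemma cmod_schur_trace_le:
  fixes R C :: "complex^'n^'m" and T :: "complex^'m^'n"
  assumes "row_norm R \<le> 1"
  shows "cmod (mtrace (schur R C ** T)) \<le> weighted_root_sum T (\<chi> i j. (cmod (C$i$j))\<^sup>2)"
proof -
  have R_rows: "L2_set (\<lambda>j. cmod (R$i$j)) UNIV \<le> 1" for i
    using assms row_norm_le_iff by blast
  have "cmod (mtrace (schur R C ** T)) \<le> (\<Sum>i\<in>UNIV. cmod (\<Sum>j\<in>UNIV. R$i$j * (C$i$j * T$j$i)))"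
    unfolding mtrace_schur_mult mult.assoc by (rule norm_sum)
  also have "\<dots> \<le> (\<Sum>i\<in>UNIV. \<Sum>j\<in>UNIV. \<bar>cmod (R$i$j)\<bar> * \<bar>cmod (C$i$j * T$j$i)\<bar>)"
    by (intro sum_mono order_trans[OF norm_sum]) (simp add: norm_mult)
  also have "\<dots> \<le> (\<Sum>i\<in>UNIV. L2_set (\<lambda>j. cmod (R$i$j)) UNIV * L2_set (\<lambda>j. cmod (C$i$j * T$j$i)) UNIV)"
    by (intro sum_mono L2_set_mult_ineq)
  also have "\<dots> \<le> (\<Sum>i\<in>UNIV. L2_set (\<lambda>j. cmod (C$i$j * T$j$i)) UNIV)"
    by (intro sum_mono mult_left_le_one_le R_rows) auto
  finally show ?thesis
    by (simp only: weighted_root_sum_cmod_sq)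
qed

lemma schur_trace_attained:
  fixes C :: "complex^'n^'m" and T :: "complex^'m^'n"
  shows "\<exists>R. row_norm R \<le> 1 \<and>
    mtrace (schur R C ** T) = of_real (weighted_root_sum T (\<chi> i j. (cmod (C$i$j))\<^sup>2))"
proof -
  define s where "s i = L2_set (\<lambda>j. cmod (C$i$j * T$j$i)) UNIV" for i
  define R :: "complex^'n^'m" where "R = (\<chi> i j. cnj (C$i$j * T$j$i) / of_real (s i))"
  have "row_norm R \<le> 1"
    unfolding row_norm_le_iff R_def s_def vec_lambda_beta by (intro allI L2_set_conj_normalized(1))
  moreover have "mtrace (schur R C ** T) = (\<Sum>i\<in>UNIV. of_real (s i))"
    unfolding mtrace_schur_mult R_def s_def vec_lambda_beta mult.assoc
    by (simp only: L2_set_conj_normalized(2))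
  ultimately show ?thesis
    by (auto simp: weighted_root_sum_cmod_sq s_def)
qed

lemma weighted_root_sum_attained:
  fixes T :: "complex^'m^'n" and b :: "real^'n^'m"
  assumes b_nonneg: "\<forall>i j. 0 \<le> b$i$j" and col_sums: "\<forall>j. (\<Sum>i\<in>UNIV. b$i$j) \<le> 1"
  shows "\<exists>R C. row_norm R \<le> 1 \<and> col_norm C \<le> 1 \<and>
           cmod (mtrace (schur R C ** T)) = weighted_root_sum T b"
proof -
  define C :: "complex^'n^'m" where "C = (\<chi> i j. of_real (sqrt (b$i$j)))"
  have b_eq: "b = (\<chi> i j. (cmod (C$i$j))\<^sup>2)"
    unfolding C_def using b_nonneg by (simp add: vec_eq_iff)
  have "col_norm C \<le> 1"
    unfolding col_norm_le_iff L2_set_le_1_iff using col_sums by (simp add: b_eq)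
  moreover obtain R where "row_norm R \<le> 1"
    and "mtrace (schur R C ** T) = of_real (weighted_root_sum T b)"
    using schur_trace_attained[of C T] by (auto simp flip: b_eq)
  moreover have "cmod (of_real (weighted_root_sum T b)) = weighted_root_sum T b"
    using weighted_root_sum_nonneg[OF b_nonneg] by simp
  ultimately show ?thesis
    by metis
qed

lemma weighted_root_sum_le:
  fixes T :: "complex^'m^'n" and b :: "real^'n^'m"
  assumes b_nonneg: "\<forall>i j. 0 \<le> b$i$j" and col_sums: "\<forall>j. (\<Sum>i\<in>UNIV. b$i$j) \<le> 1"
  shows "weighted_root_sum T b
           \<le> sqrt (real (CARD('m) * CARD('n))) * Max ((\<lambda>(j, i). cmod (T$j$i)) ` UNIV)"
proof -
  define M where "M = Max ((\<lambda>(j, i). cmod (T$j$i)) ` UNIV)"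
  have T_le_M: "cmod (T$j$i) \<le> M" for i j
    unfolding M_def by (rule Max_ge) auto
  then have M_nonneg: "0 \<le> M"
    using norm_ge_zero order_trans by blast
  have "(\<Sum>i\<in>UNIV. \<Sum>j\<in>UNIV. b$i$j) = (\<Sum>j\<in>UNIV. \<Sum>i\<in>UNIV. b$i$j)"
    by (rule sum.swap)
  also have "\<dots> \<le> (\<Sum>j\<in>(UNIV::'n set). 1)"
    using col_sums by (intro sum_mono) blast
  finally have total: "(\<Sum>i\<in>UNIV. \<Sum>j\<in>UNIV. b$i$j) \<le> CARD('n)"
    by simp
  have "weighted_root_sum T b \<le> (\<Sum>i\<in>UNIV. sqrt (M\<^sup>2 * (\<Sum>j\<in>UNIV. b$i$j)))"
    unfolding weighted_root_sum_def sum_distrib_left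
    by (intro sum_mono real_sqrt_le_mono mult_right_mono power_mono T_le_M) (auto simp: b_nonneg)
  also have "\<dots> = M * (\<Sum>i\<in>UNIV. sqrt (\<Sum>j\<in>UNIV. b$i$j))"
    using M_nonneg by (simp add: real_sqrt_mult flip: sum_distrib_left)
  also have "\<dots> \<le> M * sqrt (CARD('m) * (\<Sum>i\<in>UNIV. \<Sum>j\<in>UNIV. b$i$j))"
    using b_nonneg
    by (intro mult_left_mono M_nonneg sum_sqrt_le_sqrt_card_mult_sum) (simp add: sum_nonneg)
  also have "\<dots> \<le> M * sqrt (CARD('m) * CARD('n))"
    using total by (intro mult_left_mono M_nonneg real_sqrt_le_mono) simp
  finally show ?thesis
    by (simp add: M_def mult.commute)
qed

lemma Sup_weighted_root_sum_le:
  fixes T :: "complex^'m^'n"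
  shows "Sup {weighted_root_sum T b | b :: real^'n^'m.
                (\<forall>i j. b$i$j \<ge> 0) \<and> (\<forall>j. (\<Sum>i\<in>UNIV. b$i$j) \<le> 1)}
       \<le> sqrt (real (CARD('m) * CARD('n))) * Max ((\<lambda>(j, i). cmod (T$j$i)) ` UNIV)"
proof (rule cSup_least)
  show "{weighted_root_sum T b | b :: real^'n^'m.
           (\<forall>i j. b$i$j \<ge> 0) \<and> (\<forall>j. (\<Sum>i\<in>UNIV. b$i$j) \<le> 1)} \<noteq> {}"
    by (auto intro!: exI[of _ 0])
qed (use weighted_root_sum_le in blast)

lemma Sup_cmod_schur_trace_eq_Sup_weighted_root_sum:
  fixes T :: "complex^'m^'n"
  shows "Sup {cmod (mtrace (schur R C ** T)) | R C :: complex^'n^'m.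
                row_norm R \<le> 1 \<and> col_norm C \<le> 1}
       = Sup {weighted_root_sum T b | b :: real^'n^'m.
                (\<forall>i j. b$i$j \<ge> 0) \<and> (\<forall>j. (\<Sum>i\<in>UNIV. b$i$j) \<le> 1)}"
    (is "Sup ?traces = Sup ?sums")
proof (rule cSup_eq_cSup[symmetric])
  show "bdd_above ?sums"
    by (rule bdd_aboveI) (use weighted_root_sum_le in blast)
  show "\<exists>y\<in>?sums. x \<le> y" if "x \<in> ?traces" for x
  proof -
    from that obtain R C :: "complex^'n^'m" where "row_norm R \<le> 1" "col_norm C \<le> 1"
      and x: "x = cmod (mtrace (schur R C ** T))" by blast
    then have "weighted_root_sum T (\<chi> i j. (cmod (C$i$j))\<^sup>2) \<in> ?sums"
      by (auto simp: col_norm_le_iff L2_set_le_1_iff)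
    with x show ?thesis
      using cmod_schur_trace_le \<open>row_norm R \<le> 1\<close> by blast
  qed
  show "\<exists>y\<in>?traces. x \<le> y" if "x \<in> ?sums" for x
  proof -
    from that obtain b :: "real^'n^'m" where b: "\<forall>i j. 0 \<le> b$i$j" "\<forall>j. (\<Sum>i\<in>UNIV. b$i$j) \<le> 1"
      and x: "x = weighted_root_sum T b" by blast
    obtain R C :: "complex^'n^'m" where "row_norm R \<le> 1" "col_norm C \<le> 1"
      and "weighted_root_sum T b = cmod (mtrace (schur R C ** T))"
      using weighted_root_sum_attained[OF b] by metis
    then have "x \<in> ?traces"
      unfolding x by blast
    then show ?thesis by blast
  qed
qed

theorem mainTheorem4:
  fixes T :: "complex^'n^'n"
  shows "Sup {cmod (mtrace (schur R C ** T)) | R C :: complex^'n^'n.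
                 row_norm R \<le> 1 \<and> col_norm C \<le> 1}
         = Sup {(\<Sum>i\<in>UNIV. sqrt (\<Sum>j\<in>UNIV. (cmod (T$j$i))^2 * b$i$j)) | b :: real^'n^'n.
                 (\<forall>i j. b$i$j \<ge> 0) \<and> (\<forall>j. (\<Sum>i\<in>UNIV. b$i$j) \<le> 1)}
       \<and> Sup {cmod (mtrace (schur R C ** T)) | R C :: complex^'n^'n.
                 row_norm R \<le> 1 \<and> col_norm C \<le> 1}
         \<le> real CARD('n) * Max ((\<lambda>(i,j). cmod (T$i$j)) ` UNIV)"
  using Sup_cmod_schur_trace_eq_Sup_weighted_root_sum[of T] Sup_weighted_root_sum_le[of T]
  by (simp add: weighted_root_sum_def)

end
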